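(* Let $g\colon\mathbb{R}^d\to\mathbb{R}\cup\{+\infty\}$ be closed and $\alpha$-strongly convex with minimizer $x^\star$. For each $x\in\mathbb{R}^d$ let $g_x\colon\mathbb{R}^d\to\mathbb{R}\cup\{+\infty\}$ be closed convex with $|g_x(y)-g(y)|\le\frac q2\|y-x\|^2$ for all $y$. Let $\theta>q$, $x_0\in\mathbb{R}^d$ and $x_{k+1}=\operatorname{argmin}_{x}\{g_{x_k}(x)+\frac\theta2\|x-x_k\|^2\}$. Then for all $k\ge0$, $$\|x_{k+1}-x^\star\|\le\Big(\frac{\theta+q}{\alpha+\theta}\Big)^{\frac{k+1}{2}}\|x_0-x^\star\|.$$ *)

theory Defs
  imports "HOL-Analysis.Analysis"
begin

text \<open>Extended-valued functions f :: 'a \<Rightarrow> ereal, meant to take values in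
  the reals or +infinity.\<close>

definition ext_closed :: "('a::real_normed_vector \<Rightarrow> ereal) \<Rightarrow> bool" where
  "ext_closed f \<longleftrightarrow> closed {(x, t::real). f x \<le> ereal t}"

definition ext_strongly_convex :: "real \<Rightarrow> ('a::real_normed_vector \<Rightarrow> ereal) \<Rightarrow> bool" where
  "ext_strongly_convex \<alpha> f \<longleftrightarrow>
     (\<forall>x y t. 0 \<le> t \<and> t \<le> 1 \<longrightarrow>
        f ((1 - t) *\<^sub>R x + t *\<^sub>R y)
          \<le> ereal (1 - t) * f x + ereal t * f y - ereal (\<alpha> / 2 * t * (1 - t) * (norm (x - y))\<^sup>2))"

definition ext_convex :: "('a::real_normed_vector \<Rightarrow> ereal) \<Rightarrow> bool" where
  "ext_convex f \<longleftrightarrow> ext_strongly_convex 0 f"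

end

theory Submission
  imports Defs
begin

text \<open>The iterate \<open>x (Suc k)\<close> minimizes the \<open>\<theta>\<close>-strongly convex function
  \<open>gx (x k) + \<theta>/2 \<parallel>\<cdot> - x k\<parallel>\<^sup>2\<close>, which therefore grows quadratically away from it; likewise
  \<open>g\<close> grows with rate \<open>\<alpha>\<close> away from \<open>xstar\<close>. Evaluating the first growth bound at \<open>xstar\<close>, the
  second at \<open>x (Suc k)\<close>, adding them and trading the model \<open>gx (x k)\<close> for \<open>g\<close> at a cost of
  \<open>q/2 \<parallel>\<cdot> - x k\<parallel>\<^sup>2\<close> on each side gives
  \<open>(\<alpha> + \<theta>) \<parallel>x (Suc k) - xstar\<parallel>\<^sup>2 \<le> (\<theta> + q) \<parallel>x k - xstar\<parallel>\<^sup>2\<close>; the leftover multiple of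
  \<open>\<parallel>x (Suc k) - x k\<parallel>\<^sup>2\<close> has the sign of \<open>\<theta> - q > 0\<close> and is dropped.\<close>

lemma norm_convex_combination_diff_squared:
  fixes x y c :: "'a::real_inner"
  shows "(norm ((1 - t) *\<^sub>R x + t *\<^sub>R y - c))\<^sup>2
    = (1 - t) * (norm (x - c))\<^sup>2 + t * (norm (y - c))\<^sup>2 - t * (1 - t) * (norm (x - y))\<^sup>2"
proof -
  have "(1 - t) *\<^sub>R x + t *\<^sub>R y - c = (1 - t) *\<^sub>R (x - c) + t *\<^sub>R (y - c)"
    by (simp add: algebra_simps)
  moreover have "x - y = (x - c) - (y - c)"
    by simp
  ultimately show ?thesis
    by (simp add: power2_norm_eq_inner inner_simps algebra_simps)
qed

lemma le_of_interpolation_bound: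
  fixes a b K :: real
  assumes interp: "\<And>t. 0 < t \<Longrightarrow> t < 1 \<Longrightarrow> a \<le> (1 - t) * a + t * b - K * t * (1 - t)"
  shows "a + K \<le> b"
proof -
  have gap: "a + K - b \<le> K * t" if "0 < t" "t < 1" for t
  proof -
    have "t * (a + K - b - K * t) \<le> 0"
      using interp[OF that] by (simp add: algebra_simps)
    then show ?thesis
      using that by (simp add: mult_le_0_iff)
  qed
  have "a + K - b \<le> 0 + e" if "0 < e" for e
  proof -
    define t where "t = min (1/2) (e / (\<bar>K\<bar> + 1))"
    have t: "0 < t" "t < 1"
      using that by (auto simp: t_def)
    have "K * t \<le> (\<bar>K\<bar> + 1) * t"
      using t by (intro mult_right_mono) auto
    also have "\<dots> \<le> (\<bar>K\<bar> + 1) * (e / (\<bar>K\<bar> + 1))"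
      by (intro mult_left_mono) (auto simp: t_def)
    also have "\<dots> = e"
      by simp
    finally show ?thesis
      using gap[OF t] by simp
  qed
  then show ?thesis
    using field_le_epsilon[of "a + K - b" 0] by simp
qed

lemma ext_strongly_convex_add_quadratic:
  fixes f :: "'a::real_inner \<Rightarrow> ereal"
  assumes conv: "ext_convex f" and not_minf: "\<And>y. f y \<noteq> -\<infinity>"
  shows "ext_strongly_convex \<mu> (\<lambda>y. f y + ereal (\<mu> / 2 * (norm (y - c))\<^sup>2))"
  unfolding ext_strongly_convex_def
proof (intro allI impI)
  fix x y :: 'a and t :: real
  assume t: "0 \<le> t \<and> t \<le> 1"
  define w where "w = (1 - t) *\<^sub>R x + t *\<^sub>R y"
  have fw: "f w \<le> ereal (1 - t) * f x + ereal t * f y"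
    using conv t unfolding ext_convex_def ext_strongly_convex_def w_def by auto
  have quad: "(norm (w - c))\<^sup>2
      = (1 - t) * (norm (x - c))\<^sup>2 + t * (norm (y - c))\<^sup>2 - t * (1 - t) * (norm (x - y))\<^sup>2"
    unfolding w_def by (rule norm_convex_combination_diff_squared)
  show "f w + ereal (\<mu> / 2 * (norm (w - c))\<^sup>2)
      \<le> ereal (1 - t) * (f x + ereal (\<mu> / 2 * (norm (x - c))\<^sup>2))
        + ereal t * (f y + ereal (\<mu> / 2 * (norm (y - c))\<^sup>2))
        - ereal (\<mu> / 2 * t * (1 - t) * (norm (x - y))\<^sup>2)"
  proof (cases "t = 0 \<or> t = 1")
    case True
    then show ?thesis
      by (auto simp: w_def zero_ereal_def[symmetric])
  next
    case False
    with t have t: "0 < t" "t < 1"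
      by auto
    show ?thesis
    proof (cases "f x = \<infinity> \<or> f y = \<infinity>")
      case True
      then show ?thesis
        using t not_minf[of x] not_minf[of y] by (auto simp: ereal_mult_infty)
    next
      case False
      then obtain a b where ab: "f x = ereal a" "f y = ereal b"
        using not_minf[of x] not_minf[of y] by (cases "f x"; cases "f y") auto
      with fw obtain r where r: "f w = ereal r" "r \<le> (1 - t) * a + t * b"
        using not_minf[of w] by (cases "f w") auto
      have "\<mu> / 2 * (norm (w - c))\<^sup>2 = (1 - t) * (\<mu> / 2 * (norm (x - c))\<^sup>2)
          + t * (\<mu> / 2 * (norm (y - c))\<^sup>2) - \<mu> / 2 * t * (1 - t) * (norm (x - y))\<^sup>2"
        unfolding quad by (simp add: field_simps)
      with ab r show ?thesis
        by (simp add: algebra_simps)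
    qed
  qed
qed

lemma ext_strongly_convex_minimum_growth:
  fixes f :: "'a::real_inner \<Rightarrow> ereal"
  assumes sc: "ext_strongly_convex \<mu> f" and not_minf: "\<And>y. f y \<noteq> -\<infinity>"
    and min: "\<And>y. f m \<le> f y" and finite: "f m < \<infinity>"
  shows "f m + ereal (\<mu> / 2 * (norm (y - m))\<^sup>2) \<le> f y"
proof (cases "f y")
  case PInf
  then show ?thesis
    by simp
next
  case MInf
  with not_minf show ?thesis
    by simp
next
  case (real b)
  obtain a where a: "f m = ereal a"
    using finite not_minf[of m] by (cases "f m") auto
  have "a + \<mu> / 2 * (norm (m - y))\<^sup>2 \<le> b"
  proof (rule le_of_interpolation_bound)
    fix t :: real
    assume t: "0 < t" "t < 1"
    have "f m \<le> f ((1 - t) *\<^sub>R m + t *\<^sub>R y)"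
      by (rule min)
    also have "\<dots> \<le> ereal (1 - t) * f m + ereal t * f y
        - ereal (\<mu> / 2 * t * (1 - t) * (norm (m - y))\<^sup>2)"
      using sc t unfolding ext_strongly_convex_def by auto
    finally show "a \<le> (1 - t) * a + t * b - \<mu> / 2 * (norm (m - y))\<^sup>2 * t * (1 - t)"
      using a real by (simp add: algebra_simps)
  qed
  then show ?thesis
    using a real by (simp add: norm_minus_commute)
qed

lemma ereal_two_sided_bound_nonneg:
  fixes a b :: ereal
  assumes "a \<le> b + ereal e" "b \<le> a + ereal e" "\<bar>b\<bar> \<noteq> \<infinity>"
  shows "0 \<le> e"
  using assms by (cases a; cases b) auto

lemma inexact_prox_step_contraction:
  fixes g h :: "'a::real_inner \<Rightarrow> ereal"
  assumes g_sc: "ext_strongly_convex \<alpha> g" and g_not_minf: "\<And>y. g y \<noteq> -\<infinity>"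
    and s_min: "\<And>y. g s \<le> g y" and g_s_finite: "g s < \<infinity>"
    and h_convex: "ext_convex h" and h_not_minf: "\<And>y. h y \<noteq> -\<infinity>"
    and h_upper: "\<And>y. h y \<le> g y + ereal (q / 2 * (norm (y - z))\<^sup>2)"
    and h_lower: "\<And>y. g y \<le> h y + ereal (q / 2 * (norm (y - z))\<^sup>2)"
    and p_min: "\<And>y. h p + ereal (\<theta> / 2 * (norm (p - z))\<^sup>2) \<le> h y + ereal (\<theta> / 2 * (norm (y - z))\<^sup>2)"
    and q_le: "q \<le> \<theta>"
  shows "(\<alpha> + \<theta>) * (norm (p - s))\<^sup>2 \<le> (\<theta> + q) * (norm (z - s))\<^sup>2"
proof -
  define H where "H y = h y + ereal (\<theta> / 2 * (norm (y - z))\<^sup>2)" for y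
  obtain C where C: "g s = ereal C"
    using g_s_finite g_not_minf[of s] by (cases "g s") auto
  obtain B where B: "h s = ereal B"
    using h_upper[of s] h_not_minf[of s] C by (cases "h s") auto
  have H_growth: "H p + ereal (\<theta> / 2 * (norm (s - p))\<^sup>2) \<le> H s"
  proof (rule ext_strongly_convex_minimum_growth)
    show "ext_strongly_convex \<theta> H"
      unfolding H_def using h_convex h_not_minf by (rule ext_strongly_convex_add_quadratic)
    show "H y \<noteq> -\<infinity>" for y
      using h_not_minf[of y] by (simp add: H_def)
    show "H p \<le> H y" for y
      using p_min by (simp add: H_def)
    show "H p < \<infinity>"
      using p_min[of s] B by (auto simp: H_def)
  qed
  obtain A where A: "h p = ereal A"
    using H_growth B h_not_minf[of p] by (cases "h p") (auto simp: H_def)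
  obtain D where D: "g p = ereal D"
    using h_lower[of p] g_not_minf[of p] A by (cases "g p") auto
  have g_growth: "g s + ereal (\<alpha> / 2 * (norm (p - s))\<^sup>2) \<le> g p"
    using g_sc g_not_minf s_min g_s_finite by (rule ext_strongly_convex_minimum_growth)
  have "(\<theta> - q) * (norm (p - z))\<^sup>2 \<ge> 0"
    using q_le by simp
  with H_growth g_growth h_upper[of s] h_lower[of p] A B C D show ?thesis
    by (simp add: H_def norm_minus_commute algebra_simps)
qed

lemma powr_half_bound_of_squared_contraction:
  fixes d :: "nat \<Rightarrow> real"
  assumes r: "0 < r" and nonneg: "\<And>k. 0 \<le> d k"
    and contr: "\<And>k. (d (Suc k))\<^sup>2 \<le> r * (d k)\<^sup>2"
  shows "d k \<le> r powr (real k / 2) * d 0"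
proof (induction k)
  case 0
  then show ?case
    using r by simp
next
  case (Suc k)
  have "d (Suc k) = sqrt ((d (Suc k))\<^sup>2)"
    using nonneg by simp
  also have "\<dots> \<le> sqrt (r * (d k)\<^sup>2)"
    using contr by (rule real_sqrt_le_mono)
  also have "\<dots> = r powr (1/2) * d k"
    using r nonneg by (simp add: real_sqrt_mult powr_half_sqrt)
  also have "\<dots> \<le> r powr (1/2) * (r powr (real k / 2) * d 0)"
    using Suc by (simp add: mult_left_mono)
  also have "\<dots> = r powr (real (Suc k) / 2) * d 0"
    using r by (simp add: powr_add[symmetric] add_divide_distrib)
  finally show ?case .
qed

theorem mainTheorem10:
  fixes g :: "real ^ 'd \<Rightarrow> ereal"
    and gx :: "real ^ 'd \<Rightarrow> real ^ 'd \<Rightarrow> ereal"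
    and \<alpha> q \<theta> :: real
    and xstar :: "real ^ 'd"
    and x :: "nat \<Rightarrow> real ^ 'd"
  assumes g_not_minf: "\<And>y. g y \<noteq> -\<infinity>"
    and g_closed: "ext_closed g"
    and alpha_pos: "\<alpha> > 0"
    and g_sc: "ext_strongly_convex \<alpha> g"
    and xstar_min: "\<And>y. g xstar \<le> g y"
    and g_proper: "g xstar < \<infinity>"
    and gx_not_minf: "\<And>z y. gx z y \<noteq> -\<infinity>"
    and gx_closed: "\<And>z. ext_closed (gx z)"
    and gx_convex: "\<And>z. ext_convex (gx z)"
    and gx_upper: "\<And>z y. gx z y \<le> g y + ereal (q / 2 * (norm (y - z))\<^sup>2)"
    and gx_lower: "\<And>z y. g y \<le> gx z y + ereal (q / 2 * (norm (y - z))\<^sup>2)"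
    and theta_gt: "\<theta> > q"
    and step: "\<And>k y. gx (x k) (x (Suc k)) + ereal (\<theta> / 2 * (norm (x (Suc k) - x k))\<^sup>2)
                       \<le> gx (x k) y + ereal (\<theta> / 2 * (norm (y - x k))\<^sup>2)"
  shows "\<forall>k. norm (x (Suc k) - xstar)
           \<le> ((\<theta> + q) / (\<alpha> + \<theta>)) powr ((real k + 1) / 2) * norm (x 0 - xstar)"
proof -
  \<comment> \<open>\<open>q \<ge> 0\<close> follows from
    the two-sided bound at \<open>xstar\<close> for a model centred at distance 1 from it.\<close>
  obtain b :: "real ^ 'd" where b: "b \<in> Basis"
    using nonempty_Basis by blast
  have "0 \<le> q / 2 * (norm (xstar - (xstar + b)))\<^sup>2"
    using gx_upper[of "xstar + b" xstar] gx_lower[of xstar "xstar + b"] g_proper g_not_minf[of xstar]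
    by (intro ereal_two_sided_bound_nonneg) auto
  then have "0 \<le> q"
    using b by (simp add: zero_le_mult_iff)
  then have r_pos: "0 < (\<theta> + q) / (\<alpha> + \<theta>)"
    using alpha_pos theta_gt by simp
  have "(\<alpha> + \<theta>) * (norm (x (Suc k) - xstar))\<^sup>2 \<le> (\<theta> + q) * (norm (x k - xstar))\<^sup>2" for k
    using g_sc g_not_minf xstar_min g_proper gx_convex gx_not_minf gx_upper gx_lower step
    by (rule inexact_prox_step_contraction) (use theta_gt in simp)
  then have contraction:
    "(norm (x (Suc k) - xstar))\<^sup>2 \<le> (\<theta> + q) / (\<alpha> + \<theta>) * (norm (x k - xstar))\<^sup>2" for k
    using \<open>0 \<le> q\<close> alpha_pos theta_gt by (simp add: field_simps)
  have "norm (x k - xstar) \<le> ((\<theta> + q) / (\<alpha> + \<theta>)) powr (real k / 2) * norm (x 0 - xstar)" for k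
    using powr_half_bound_of_squared_contraction[where d = "\<lambda>k. norm (x k - xstar)",
        OF r_pos norm_ge_zero contraction] .
  then show ?thesis
    by (metis of_nat_Suc add.commute)
qed

end
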